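(* Let $p_N(x)=\prod_{i=1}^N(x-z_i)$ with $z_1,\dots,z_N\in\mathbb{C}$ pairwise distinct, and let $\omega_N=\{x_1,\dots,x_N\}\subset\mathbb{S}^2$ with $\pi_{\mathbb{S}^2}(x_i)=z_i$. Then $$\mathcal{E}_{\log}(\omega_N)-\sum_{i=1}^N\log\mu_{\rm norm}(p_N,z_i)=-N\log\Big(\frac{\sqrt{N(N+1)}}{2}\Big)-N\log\Big(\Big(\int_{\mathbb{S}^2}\prod_{j=1}^N|p-x_j|^2\,d\sigma(p)\Big)^{1/2}\Big),$$ where $\sigma$ is the surface measure on $\mathbb{S}^2$ normalized so that $\sigma(\mathbb{S}^2)=1$.
   Context: $\mathbb{S}^2$ is the unit sphere in $\mathbb{R}^3$; $\pi_{\mathbb{S}^2}(a,b,c)=\frac{a+ib}{1-c}$. $\mathcal{E}_{\log}(\{x_1,\dots,x_N\})=-\sum_{i\ne j}\log\|x_i-x_j\|$. For a root $z$ of a degree-$N$ polynomial $P$, $\mu_{\rm norm}(P,z)=N^{1/2}\|P\|(1+|z|^2)^{N/2-1}/|P'(z)|$, where $\|\sum_{i=0}^N a_iz^i\|=(\sum_i\binom{N}{i}^{-1}|a_i|^2)^{1/2}$ is the Bombieri–Weyl norm. *)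

theory Defs
  imports "HOL-Analysis.Analysis" "HOL-Computational_Algebra.Polynomial"
begin

definition stereo :: "real^3 \<Rightarrow> complex" where
  "stereo x = Complex (x$1) (x$2) / complex_of_real (1 - x$3)"

definition log_energy :: "nat \<Rightarrow> (nat \<Rightarrow> real^3) \<Rightarrow> real" where
  "log_energy N x = - (\<Sum>i<N. \<Sum>j\<in>{..<N} - {i}. ln (norm (x i - x j)))"

definition bw_norm :: "nat \<Rightarrow> complex poly \<Rightarrow> real" where
  "bw_norm N P = sqrt (\<Sum>i\<le>N. (cmod (coeff P i))\<^sup>2 / real (N choose i))"

definition mu_norm :: "nat \<Rightarrow> complex poly \<Rightarrow> complex \<Rightarrow> real" where
  "mu_norm N P z = sqrt (real N) * bw_norm N P * (1 + (cmod z)\<^sup>2) powr (real N / 2 - 1)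
                    / cmod (poly (pderiv P) z)"

text \<open>Integral over the unit sphere with respect to the normalized surface measure
  (total mass 1), via spherical coordinates.\<close>
definition sphere_param :: "real \<Rightarrow> real \<Rightarrow> real^3" where
  "sphere_param \<theta> \<phi> = vector [sin \<theta> * cos \<phi>, sin \<theta> * sin \<phi>, cos \<theta>]"

definition sphere_integral :: "(real^3 \<Rightarrow> real) \<Rightarrow> real" where
  "sphere_integral f = integral (cbox (0, 0) (pi, 2 * pi))
       (\<lambda>(\<theta>, \<phi>). f (sphere_param \<theta> \<phi>) * sin \<theta>) / (4 * pi)"

end

theory Submission
  imports Defs
begin

text \<open>Under stereographic projection the chordal distance becomes
  |x - y|^2 = 4 |z - w|^2 / ((1 + |z|^2) (1 + |w|^2)), so the energy splits into the terms
  ln |P'(z_i)| and the conformal factors ln (1 + |z_i|^2), which cancel against the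
  corresponding terms of ln mu_norm up to the Bombieri--Weyl norm.
  For the integral, a point of the sphere with homogeneous coordinates
  (cos (t/2) e^(i f) : sin (t/2)) turns prod_j |p - x_j|^2 into 4^N / prod_j (1 + |z_j|^2) times
  |sum_k a_k cos (t/2)^k sin (t/2)^(N-k) e^(i k f)|^2. Integrating over f removes the cross terms,
  and the remaining t-integrals are Beta integrals 2 / ((N + 1) (N choose k)): precisely the
  Bombieri--Weyl weights.\<close>

lemma power2_norm_vec3: "(norm (v::real^3))\<^sup>2 = (v$1)\<^sup>2 + (v$2)\<^sup>2 + (v$3)\<^sup>2"
  unfolding power2_norm_eq_inner by (simp add: inner_vec_def sum_3 power2_eq_square)

lemma inner_vec3: "(x::real^3) \<bullet> y = x$1 * y$1 + x$2 * y$2 + x$3 * y$3"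
  by (simp add: inner_vec_def sum_3)

lemma power2_norm_diff_unit:
  fixes x y :: "'a::real_inner"
  assumes "norm x = 1" "norm y = 1"
  shows "(norm (x - y))\<^sup>2 = 2 - 2 * (x \<bullet> y)"
proof -
  have "x \<bullet> x = 1" "y \<bullet> y = 1" using assms by (simp_all flip: power2_norm_eq_inner)
  thus ?thesis by (simp add: power2_norm_eq_inner inner_diff_left inner_diff_right inner_commute)
qed

lemma stereo_inverse:
  assumes "norm x = 1" "x$3 \<noteq> 1" "stereo x = z"
  shows "1 + (cmod z)\<^sup>2 = 2 / (1 - x$3)"
    and "x$1 = 2 * Re z / (1 + (cmod z)\<^sup>2)"
    and "x$2 = 2 * Im z / (1 + (cmod z)\<^sup>2)"
    and "x$3 = ((cmod z)\<^sup>2 - 1) / (1 + (cmod z)\<^sup>2)"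
proof -
  have sphere: "(x$1)\<^sup>2 + (x$2)\<^sup>2 + (x$3)\<^sup>2 = 1" using assms(1) power2_norm_vec3[of x] by simp
  have d: "1 - x$3 \<noteq> 0" using assms(2) by simp
  have "z * complex_of_real (1 - x$3) = Complex (x$1) (x$2)"
    using assms(3) d unfolding stereo_def by (auto simp: field_simps)
  then have "Re (z * complex_of_real (1 - x$3)) = x$1" "Im (z * complex_of_real (1 - x$3)) = x$2"
    by simp_all
  then have "Re z * (1 - x$3) = x$1" "Im z * (1 - x$3) = x$2"
    by simp_all
  hence re: "Re z = x$1 / (1 - x$3)" and im: "Im z = x$2 / (1 - x$3)"
    using d by (simp_all add: field_simps)
  have "(cmod z)\<^sup>2 = ((x$1)\<^sup>2 + (x$2)\<^sup>2) / (1 - x$3)\<^sup>2"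
    by (simp add: cmod_power2 re im power_divide add_divide_distrib)
  also have "(x$1)\<^sup>2 + (x$2)\<^sup>2 = (1 - x$3) * (1 + x$3)"
    using sphere by (simp add: algebra_simps power2_eq_square)
  finally have c: "(cmod z)\<^sup>2 = (1 + x$3) / (1 - x$3)"
    using d by (simp add: power2_eq_square)
  show A: "1 + (cmod z)\<^sup>2 = 2 / (1 - x$3)" using c d by (simp add: field_simps)
  show "x$1 = 2 * Re z / (1 + (cmod z)\<^sup>2)" using A re d by simp
  show "x$2 = 2 * Im z / (1 + (cmod z)\<^sup>2)" using A im d by simp
  have "x$3 * (1 + (cmod z)\<^sup>2) = (cmod z)\<^sup>2 - 1" using c d by (simp add: field_simps)
  then show "x$3 = ((cmod z)\<^sup>2 - 1) / (1 + (cmod z)\<^sup>2)"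
    using add_pos_nonneg[OF zero_less_one zero_le_power2[of "cmod z"]] by (simp add: eq_divide_eq)
qed

lemma stereo_chordal_dist:
  assumes "norm x = 1" "x$3 \<noteq> 1" "stereo x = z" "norm y = 1" "y$3 \<noteq> 1" "stereo y = w"
  shows "(norm (x - y))\<^sup>2 * ((1 + (cmod z)\<^sup>2) * (1 + (cmod w)\<^sup>2)) = 4 * (cmod (z - w))\<^sup>2"
proof -
  define A where "A = 1 + (cmod z)\<^sup>2"
  define B where "B = 1 + (cmod w)\<^sup>2"
  have "A > 0" "B > 0" unfolding A_def B_def by (simp_all add: add_pos_nonneg)
  note sx = stereo_inverse[OF assms(1-3), folded A_def]
  note sy = stereo_inverse[OF assms(4-6), folded B_def]
  have "x \<bullet> y * (A * B) = 4 * Re z * Re w + 4 * Im z * Im w + ((cmod z)\<^sup>2 - 1) * ((cmod w)\<^sup>2 - 1)"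
    unfolding inner_vec3 sx(2-4) sy(2-4) using \<open>A > 0\<close> \<open>B > 0\<close> by (simp add: field_simps)
  then have "(norm (x - y))\<^sup>2 * (A * B)
      = 2 * A * B - 2 * (4 * Re z * Re w + 4 * Im z * Im w + ((cmod z)\<^sup>2 - 1) * ((cmod w)\<^sup>2 - 1))"
    unfolding power2_norm_diff_unit[OF assms(1,4)] by (simp add: algebra_simps)
  also have "\<dots> = 4 * (cmod (z - w))\<^sup>2"
    unfolding A_def B_def cmod_power2 by (simp add: power2_eq_square algebra_simps)
  finally show ?thesis unfolding A_def B_def .
qed

lemma ln_four: "ln (4::real) = 2 * ln 2"
  using ln_realpow[of 2 2] by simp

lemma ln_norm_diff_stereo:
  assumes "norm x = 1" "x$3 \<noteq> 1" "stereo x = z" "norm y = 1" "y$3 \<noteq> 1" "stereo y = w" "z \<noteq> w"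
  shows "ln (norm (x - y))
    = ln 2 + ln (cmod (z - w)) - ln (1 + (cmod z)\<^sup>2) / 2 - ln (1 + (cmod w)\<^sup>2) / 2"
proof -
  note e = stereo_chordal_dist[OF assms(1-6)]
  have pos: "1 + (cmod z)\<^sup>2 > 0" "1 + (cmod w)\<^sup>2 > 0" by (simp_all add: add_pos_nonneg)
  have "cmod (z - w) > 0" using assms(7) by simp
  moreover have "norm (x - y) > 0" using e pos \<open>cmod (z - w) > 0\<close> by (auto simp: power2_eq_square)
  ultimately have "2 * ln (norm (x - y)) + (ln (1 + (cmod z)\<^sup>2) + ln (1 + (cmod w)\<^sup>2))
      = 2 * ln 2 + 2 * ln (cmod (z - w))"
    using arg_cong[OF e, of ln] pos by (simp add: ln_mult ln_realpow ln_four)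
  then show ?thesis by simp
qed

lemma norm_sphere_param: "norm (sphere_param t f) = 1"
proof -
  have "(sin t * cos f)\<^sup>2 + (sin t * sin f)\<^sup>2 + (cos t)\<^sup>2
      = (sin t)\<^sup>2 * ((sin f)\<^sup>2 + (cos f)\<^sup>2) + (cos t)\<^sup>2"
    by algebra
  then have "(norm (sphere_param t f))\<^sup>2 = 1"
    unfolding power2_norm_vec3 sphere_param_def vector_3 by simp
  thus ?thesis using norm_ge_zero[of "sphere_param t f"] by (auto simp: power2_eq_1_iff)
qed

lemma sphere_param_dist_stereo:
  assumes "norm x = 1" "x$3 \<noteq> 1" "stereo x = z"
  shows "(norm (sphere_param t f - x))\<^sup>2 * (1 + (cmod z)\<^sup>2)
     = 4 * (cmod (complex_of_real (cos (t/2)) * cis f - complex_of_real (sin (t/2)) * z))\<^sup>2"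
proof -
  define A where "A = 1 + (cmod z)\<^sup>2"
  have "A > 0" unfolding A_def by (simp add: add_pos_nonneg)
  note sx = stereo_inverse[OF assms(1-3), folded A_def]
  define a where "a = cos (t/2)"
  define b where "b = sin (t/2)"
  have st: "sin t = 2 * b * a" unfolding a_def b_def using sin_double[of "t/2"] by simp
  have ct: "cos t = a\<^sup>2 - b\<^sup>2" unfolding a_def b_def using cos_double[of "t/2"] by simp
  have ab: "a\<^sup>2 + b\<^sup>2 = 1" unfolding a_def b_def by simp
  have cf: "(cos f)\<^sup>2 + (sin f)\<^sup>2 = 1" by simp
  have "sphere_param t f \<bullet> x * A
      = sin t * cos f * 2 * Re z + sin t * sin f * 2 * Im z + cos t * ((cmod z)\<^sup>2 - 1)"
    unfolding inner_vec3 sx(2-4) sphere_param_def using \<open>A > 0\<close> by (simp add: field_simps)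
  then have "(norm (sphere_param t f - x))\<^sup>2 * A
      = 2 * A - 2 * (sin t * cos f * 2 * Re z + sin t * sin f * 2 * Im z + cos t * ((cmod z)\<^sup>2 - 1))"
    unfolding power2_norm_diff_unit[OF norm_sphere_param assms(1)] by (simp add: algebra_simps)
  also have "\<dots> = 4 * ((a * cos f - b * Re z)\<^sup>2 + (a * sin f - b * Im z)\<^sup>2)"
    unfolding st ct A_def cmod_power2 using ab cf by algebra
  also have "\<dots> = 4 * (cmod (complex_of_real a * cis f - complex_of_real b * z))\<^sup>2"
    unfolding cmod_power2 by simp
  finally show ?thesis unfolding A_def a_def b_def .
qed

lemma degree_prod_monic_linear:
  "degree (\<Prod>j<N. [:- z j, 1:] :: 'a::idom poly) = N"
  by (subst degree_prod_sum_eq) auto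

lemma coeff_prod_monic_linear_top:
  "coeff (\<Prod>j<N. [:- z j, 1:] :: 'a::idom poly) N = 1"
  using lead_coeff_prod[of "\<lambda>j. [:- z j, 1:]" "{..<N}"] by (simp add: degree_prod_monic_linear)

lemma prod_linear_homogenized:
  fixes s t :: "'a::field" and z :: "nat \<Rightarrow> 'a"
  shows "(\<Prod>j<N. s - t * z j) = (\<Sum>k\<le>N. coeff (\<Prod>j<N. [:- z j, 1:]) k * s^k * t^(N - k))"
proof (cases "t = 0")
  case True
  then have "(\<Sum>k\<le>N. coeff (\<Prod>j<N. [:- z j, 1:]) k * s^k * t^(N - k))
      = (\<Sum>k\<le>N. if k = N then s^N else 0)"
    by (intro sum.cong refl) (auto simp: coeff_prod_monic_linear_top)
  then show ?thesis using True by simp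
next
  case False
  have "(\<Prod>j<N. s - t * z j) = (\<Prod>j<N. t * (s / t - z j))"
    using False by (intro prod.cong refl) (simp add: field_simps)
  also have "\<dots> = t^N * poly (\<Prod>j<N. [:- z j, 1:]) (s / t)"
    by (simp add: prod.distrib poly_prod)
  also have "\<dots> = (\<Sum>k\<le>N. t^N * (coeff (\<Prod>j<N. [:- z j, 1:]) k * (s / t)^k))"
    by (simp add: poly_altdef degree_prod_monic_linear sum_distrib_left)
  also have "\<dots> = (\<Sum>k\<le>N. coeff (\<Prod>j<N. [:- z j, 1:]) k * s^k * t^(N - k))"
  proof (intro sum.cong refl)
    fix k assume "k \<in> {..N}"
    then have "t^N = t^k * t^(N - k)" by (simp flip: power_add)
    then show "t^N * (coeff (\<Prod>j<N. [:- z j, 1:]) k * (s / t)^k)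
        = coeff (\<Prod>j<N. [:- z j, 1:]) k * s^k * t^(N - k)"
      using False by (simp add: power_divide field_simps)
  qed
  finally show ?thesis .
qed

lemma poly_pderiv_prod_linear_root:
  fixes z :: "nat \<Rightarrow> 'a::idom"
  assumes "i < N"
  shows "poly (pderiv (\<Prod>j<N. [:- z j, 1:])) (z i) = (\<Prod>j\<in>{..<N} - {i}. z i - z j)"
proof -
  have "poly (pderiv (\<Prod>j<N. [:- z j, 1:])) (z i) = (\<Sum>a<N. \<Prod>j\<in>{..<N} - {a}. z i - z j)"
    by (simp add: pderiv_prod poly_sum poly_prod pderiv_pCons)
  also have "\<dots> = (\<Sum>a<N. if a = i then (\<Prod>j\<in>{..<N} - {i}. z i - z j) else 0)"
  proof (intro sum.cong refl)
    fix a assume "a \<in> {..<N}"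
    show "(\<Prod>j\<in>{..<N} - {a}. z i - z j) = (if a = i then (\<Prod>j\<in>{..<N} - {i}. z i - z j) else 0)"
      using assms by (cases "a = i") (auto intro!: prod_zero bexI[of _ i])
  qed
  also have "\<dots> = (\<Prod>j\<in>{..<N} - {i}. z i - z j)" using assms by simp
  finally show ?thesis .
qed

lemma bw_norm_pos:
  assumes "coeff P N \<noteq> 0"
  shows "bw_norm N P > 0"
proof -
  have "0 < (cmod (coeff P N))\<^sup>2 / real (N choose N)" using assms by simp
  also have "\<dots> \<le> (\<Sum>k\<le>N. (cmod (coeff P k))\<^sup>2 / real (N choose k))"
    by (rule member_le_sum) auto
  finally show ?thesis unfolding bw_norm_def by simp
qed

lemma ln_mu_norm:
  assumes "N > 0" "bw_norm N P > 0" "poly (pderiv P) z \<noteq> 0"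
  shows "ln (mu_norm N P z) = ln (real N) / 2 + ln (bw_norm N P)
    + (real N / 2 - 1) * ln (1 + (cmod z)\<^sup>2) - ln (cmod (poly (pderiv P) z))"
proof -
  have "1 + (cmod z)\<^sup>2 > 0" by (simp add: add_pos_nonneg)
  then show ?thesis using assms unfolding mu_norm_def by (simp add: ln_div ln_mult ln_sqrt)
qed

lemma log_energy_stereo:
  fixes z :: "nat \<Rightarrow> complex" and x :: "nat \<Rightarrow> real^3"
  assumes inj: "inj_on z {..<N}"
    and pts: "\<And>i. i < N \<Longrightarrow> norm (x i) = 1" "\<And>i. i < N \<Longrightarrow> x i $ 3 \<noteq> 1"
      "\<And>i. i < N \<Longrightarrow> stereo (x i) = z i"
  shows "log_energy N x = - (real N * (real N - 1) * ln 2
      + (\<Sum>i<N. ln (cmod (poly (pderiv (\<Prod>j<N. [:- z j, 1:])) (z i))))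
      - (real N - 1) * (\<Sum>i<N. ln (1 + (cmod (z i))\<^sup>2)))"
proof -
  define a where "a = (\<lambda>i. ln (1 + (cmod (z i))\<^sup>2))"
  define L where "L = (\<Sum>i<N. a i)"
  define D where "D = (\<lambda>i. ln (cmod (poly (pderiv (\<Prod>j<N. [:- z j, 1:])) (z i))))"
  have row: "(\<Sum>j\<in>{..<N} - {i}. ln (norm (x i - x j)))
      = (real N - 1) * (ln 2 - a i / 2) + D i - (L - a i) / 2" if i: "i < N" for i
  proof -
    have ne: "z i \<noteq> z j" if "j \<in> {..<N} - {i}" for j
      using inj i that by (auto dest: inj_onD)
    have "(\<Sum>j\<in>{..<N} - {i}. ln (norm (x i - x j)))
        = (\<Sum>j\<in>{..<N} - {i}. (ln 2 - a i / 2) + ln (cmod (z i - z j)) - a j / 2)"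
      using ln_norm_diff_stereo[OF pts pts] i ne by (intro sum.cong refl) (auto simp: a_def)
    also have "\<dots> = real (card ({..<N} - {i})) * (ln 2 - a i / 2)
        + (\<Sum>j\<in>{..<N} - {i}. ln (cmod (z i - z j))) - (\<Sum>j\<in>{..<N} - {i}. a j) / 2"
      by (simp add: sum.distrib sum_subtractf sum_divide_distrib)
    also have "(\<Sum>j\<in>{..<N} - {i}. ln (cmod (z i - z j))) = ln (\<Prod>j\<in>{..<N} - {i}. cmod (z i - z j))"
      using ne by (intro ln_prod[symmetric]) auto
    also have "ln (\<Prod>j\<in>{..<N} - {i}. cmod (z i - z j)) = D i"
      unfolding D_def poly_pderiv_prod_linear_root[OF i] prod_norm ..
    also have "(\<Sum>j\<in>{..<N} - {i}. a j) = L - a i"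
      unfolding L_def using i by (simp add: sum_diff1)
    finally show ?thesis using i by simp
  qed
  have "log_energy N x = - (\<Sum>i<N. (real N - 1) * (ln 2 - a i / 2) + D i - (L - a i) / 2)"
    unfolding log_energy_def using row by simp
  also have "\<dots> = - (real N * (real N - 1) * ln 2 + (\<Sum>i<N. D i) - (real N - 1) * L)"
  proof -
    have "(\<Sum>i<N. (real N - 1) * (ln 2 - a i / 2)) = (real N - 1) * (real N * ln 2 - L / 2)"
      unfolding L_def by (simp add: sum_subtractf sum_divide_distrib flip: sum_distrib_left)
    moreover have "(\<Sum>i<N. (L - a i) / 2) = (real N * L - L) / 2"
      unfolding L_def by (simp add: sum_subtractf flip: sum_divide_distrib)
    ultimately show ?thesis by (simp add: sum_subtractf sum.distrib algebra_simps)
  qed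
  finally show ?thesis unfolding L_def a_def D_def .
qed

lemma has_integral_cis_int_mult:
  "((\<lambda>t. cis (of_int m * t)) has_integral (if m = 0 then 2 * pi else 0)) {0..2 * pi}"
proof (cases "m = 0")
  case False
  have "((\<lambda>t. cis (of_int m * t)) has_integral
      cis (of_int m * (2 * pi)) / (\<i> * of_int m) - cis (of_int m * 0) / (\<i> * of_int m)) {0..2 * pi}"
  proof (rule fundamental_theorem_of_calculus)
    fix t :: real
    have "((\<lambda>t. cis (of_int m * t) / (\<i> * of_int m)) has_vector_derivative cis (of_int m * t)) (at t)"
      using False unfolding has_vector_derivative_def
      by (auto intro!: derivative_eq_intros simp: scaleR_conv_of_real field_simps)
    then show "((\<lambda>t. cis (of_int m * t) / (\<i> * of_int m)) has_vector_derivative cis (of_int m * t))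
        (at t within {0..2 * pi})"
      by (rule has_vector_derivative_at_within)
  qed simp
  moreover have "cis (of_int m * (2 * pi)) = 1"
    by (simp add: cis.ctr complex_eq_iff mult.commute[of _ "2 * pi"])
  ultimately show ?thesis using False by simp
qed (use has_integral_const_real[of "1::complex" 0 "2 * pi"] in \<open>simp add: scaleR_conv_of_real\<close>)

lemma norm_trig_poly_sq:
  fixes d :: "nat \<Rightarrow> complex"
  shows "(cmod (\<Sum>k\<le>N. d k * cis (real k * t)))\<^sup>2 =
    Re (\<Sum>k\<le>N. \<Sum>l\<le>N. d k * cnj (d l) * cis (of_int (int k - int l) * t))"
proof -
  let ?S = "\<Sum>k\<le>N. d k * cis (real k * t)"
  have "(cmod ?S)\<^sup>2 = Re (?S * cnj ?S)"
    by (simp only: complex_norm_square[symmetric] Re_complex_of_real)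
  also have "cnj ?S = (\<Sum>l\<le>N. cnj (d l) * cis (- (real l * t)))"
    by (simp add: cis_cnj)
  also have "?S * \<dots> = (\<Sum>k\<le>N. \<Sum>l\<le>N. d k * cnj (d l) * cis (of_int (int k - int l) * t))"
    by (simp add: sum_product cis_mult algebra_simps)
  finally show ?thesis .
qed

lemma has_integral_norm_trig_poly_sq:
  fixes d :: "nat \<Rightarrow> complex"
  shows "((\<lambda>t. (cmod (\<Sum>k\<le>N. d k * cis (real k * t)))\<^sup>2)
           has_integral 2 * pi * (\<Sum>k\<le>N. (cmod (d k))\<^sup>2)) {0..2 * pi}"
proof -
  have "((\<lambda>t. \<Sum>k\<le>N. \<Sum>l\<le>N. d k * cnj (d l) * cis (of_int (int k - int l) * t)) has_integral
      (\<Sum>k\<le>N. \<Sum>l\<le>N. d k * cnj (d l) * of_real (if int k - int l = 0 then 2 * pi else 0))) {0..2 * pi}"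
    by (intro has_integral_sum finite_atMost has_integral_mult_right has_integral_cis_int_mult)
  also have "(\<Sum>k\<le>N. \<Sum>l\<le>N. d k * cnj (d l) * of_real (if int k - int l = 0 then 2 * pi else 0))
      = of_real (2 * pi * (\<Sum>k\<le>N. (cmod (d k))\<^sup>2))"
    by (simp add: if_distrib sum_distrib_left mult_ac flip: complex_norm_square cong: if_cong)
  finally have "((\<lambda>t. \<Sum>k\<le>N. \<Sum>l\<le>N. d k * cnj (d l) * cis (of_int (int k - int l) * t))
      has_integral of_real (2 * pi * (\<Sum>k\<le>N. (cmod (d k))\<^sup>2))) {0..2 * pi}" .
  from has_integral_linear[OF this bounded_linear_Re] show ?thesis
    unfolding o_def norm_trig_poly_sq Re_complex_of_real .
qed

lemma has_integral_Beta_nat: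
  "((\<lambda>t. (1 - t)^k * t^m) has_integral (fact k * fact m / fact (k + m + 1))) {0..1::real}"
proof -
  have "((\<lambda>t. t powr (real m + 1 - 1) * (1 - t) powr (real k + 1 - 1))
      has_integral Beta (real m + 1) (real k + 1)) {0..1}"
    by (rule has_integral_Beta_real) auto
  moreover have "Beta (real m + 1) (real k + 1) = fact k * fact m / fact (k + m + 1)"
    unfolding Beta_def
    using Gamma_fact[of m, where 'a=real] Gamma_fact[of k, where 'a=real]
      Gamma_fact[of "k + m + 1", where 'a=real]
    by (simp add: add_ac)
  ultimately have "((\<lambda>t. t powr (real m + 1 - 1) * (1 - t) powr (real k + 1 - 1))
      has_integral fact k * fact m / fact (k + m + 1)) {0..1}"
    by simp
  then show ?thesis
  proof (subst has_integral_spike_finite_eq[of "{0, 1}"])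
    fix t :: real assume "t \<in> {0..1} - {0, 1}"
    then show "t powr (real m + 1 - 1) * (1 - t) powr (real k + 1 - 1) = (1 - t)^k * t^m"
      by (simp add: powr_realpow)
  qed simp_all
qed

lemma has_integral_half_angle_powers:
  "((\<lambda>t. (cos (t/2)^2)^k * (sin (t/2)^2)^m * sin t)
     has_integral 2 * (fact k * fact m / fact (k + m + 1))) {0..pi}"
proof -
  define f where "f = (\<lambda>t::real. (1 - t)^k * t^m)"
  define g where "g = (\<lambda>t::real. (1 - cos t) / 2)"
  have "((\<lambda>t. (sin t / 2) *\<^sub>R f (g t)) has_integral (integral {g 0..g pi} f)) {0..pi}"
  proof (rule has_integral_substitution[where c=0 and d=1])
    show "g ` {0..pi} \<subseteq> {0..1}" unfolding g_def by (auto simp: abs_le_iff)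
    show "continuous_on {0..1} f" unfolding f_def by (intro continuous_intros)
    show "(g has_real_derivative sin t / 2) (at t within {0..pi})" for t
      unfolding g_def by (auto intro!: derivative_eq_intros)
  qed (simp_all add: g_def)
  moreover have "integral {g 0..g pi} f = fact k * fact m / fact (k + m + 1)"
    unfolding g_def f_def using has_integral_Beta_nat[of k m] by (simp add: integral_unique)
  ultimately have "((\<lambda>t. (sin t / 2) *\<^sub>R f (g t)) has_integral fact k * fact m / fact (k + m + 1))
      {0..pi}" by simp
  from has_integral_mult_right[OF this, of 2] show ?thesis
  proof (rule has_integral_eq[rotated])
    fix t
    have "1 - g t = cos (t/2)^2" "g t = sin (t/2)^2"
      unfolding g_def using cos_double_cos[of "t/2"] cos_double_sin[of "t/2"] by simp_all
    then show "2 * ((sin t / 2) *\<^sub>R f (g t)) = (cos (t/2)^2)^k * (sin (t/2)^2)^m * sin t"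
      unfolding f_def by simp
  qed
qed

lemma fact_mult_fact_div_fact_Suc:
  assumes "k \<le> N"
  shows "fact k * fact (N - k) / fact (Suc N) = 1 / ((real N + 1) * real (N choose k))"
proof -
  have "real (N choose k) = fact N / (fact k * fact (N - k))"
    using binomial_fact[OF assms] by simp
  then have "(fact N :: real) = fact k * fact (N - k) * real (N choose k)"
    by (simp add: field_simps)
  moreover have "(fact (Suc N) :: real) = (real N + 1) * fact N" by simp
  moreover have "(fact k :: real) * fact (N - k) \<noteq> 0" by simp
  ultimately show ?thesis by (simp add: divide_simps)
qed

lemma has_integral_half_angle_binomial:
  assumes "k \<le> N"
  shows "((\<lambda>t. (cos (t/2)^2)^k * (sin (t/2)^2)^(N - k) * sin t)
     has_integral 2 / ((real N + 1) * real (N choose k))) {0..pi}"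
proof -
  have "k + (N - k) + 1 = Suc N" using assms by simp
  from has_integral_half_angle_powers[of k "N - k", unfolded this fact_mult_fact_div_fact_Suc[OF assms]]
  show ?thesis by simp
qed

lemma prod_dist_sphere_param_sq:
  fixes z :: "nat \<Rightarrow> complex" and x :: "nat \<Rightarrow> real^3"
  assumes "\<And>i. i < N \<Longrightarrow> norm (x i) = 1"
    and "\<And>i. i < N \<Longrightarrow> x i $ 3 \<noteq> 1"
    and "\<And>i. i < N \<Longrightarrow> stereo (x i) = z i"
  shows "(\<Prod>j<N. (norm (sphere_param t f - x j))\<^sup>2)
    = 4^N / (\<Prod>j<N. 1 + (cmod (z j))\<^sup>2) *
      (cmod (\<Sum>k\<le>N. (coeff (\<Prod>j<N. [:- z j, 1:]) k
          * complex_of_real (cos (t/2)^k * sin (t/2)^(N - k))) * cis (real k * f)))\<^sup>2"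
proof -
  define a where "a = complex_of_real (cos (t/2))"
  define b where "b = complex_of_real (sin (t/2))"
  have "(\<Prod>j<N. (norm (sphere_param t f - x j))\<^sup>2)
      = (\<Prod>j<N. 4 * (cmod (a * cis f - b * z j))\<^sup>2 / (1 + (cmod (z j))\<^sup>2))"
  proof (intro prod.cong refl)
    fix j assume "j \<in> {..<N}"
    then have "(norm (sphere_param t f - x j))\<^sup>2 * (1 + (cmod (z j))\<^sup>2)
        = 4 * (cmod (a * cis f - b * z j))\<^sup>2"
      unfolding a_def b_def using sphere_param_dist_stereo assms by simp
    moreover have "1 + (cmod (z j))\<^sup>2 > 0" by (simp add: add_pos_nonneg)
    ultimately show "(norm (sphere_param t f - x j))\<^sup>2
        = 4 * (cmod (a * cis f - b * z j))\<^sup>2 / (1 + (cmod (z j))\<^sup>2)"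
      by (simp add: eq_divide_eq)
  qed
  also have "\<dots> = 4^N / (\<Prod>j<N. 1 + (cmod (z j))\<^sup>2) * (cmod (\<Prod>j<N. a * cis f - b * z j))\<^sup>2"
    by (simp add: prod_dividef prod.distrib power_mult_distrib prod_power_distrib flip: prod_norm)
  also have "(\<Prod>j<N. a * cis f - b * z j)
      = (\<Sum>k\<le>N. coeff (\<Prod>j<N. [:- z j, 1:]) k * (a * cis f)^k * b^(N - k))"
    by (rule prod_linear_homogenized)
  also have "\<dots> = (\<Sum>k\<le>N. (coeff (\<Prod>j<N. [:- z j, 1:]) k
      * complex_of_real (cos (t/2)^k * sin (t/2)^(N - k))) * cis (real k * f))"
  proof (intro sum.cong refl)
    fix k
    have "(a * cis f)^k * b^(N - k) = complex_of_real (cos (t/2)^k * sin (t/2)^(N - k)) * cis (real k * f)"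
      unfolding a_def b_def power_mult_distrib Complex.DeMoivre by simp
    then show "coeff (\<Prod>j<N. [:- z j, 1:]) k * (a * cis f)^k * b^(N - k) = (coeff (\<Prod>j<N. [:- z j, 1:]) k
        * complex_of_real (cos (t/2)^k * sin (t/2)^(N - k))) * cis (real k * f)"
      by (simp only: mult.assoc)
  qed
  finally show ?thesis .
qed

lemma sphere_integral_prod_dist_sq:
  fixes z :: "nat \<Rightarrow> complex" and x :: "nat \<Rightarrow> real^3"
  assumes "\<And>i. i < N \<Longrightarrow> norm (x i) = 1"
    and "\<And>i. i < N \<Longrightarrow> x i $ 3 \<noteq> 1"
    and "\<And>i. i < N \<Longrightarrow> stereo (x i) = z i"
  shows "sphere_integral (\<lambda>p. \<Prod>j<N. (norm (p - x j))\<^sup>2)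
     = 4^N * (bw_norm N (\<Prod>j<N. [:- z j, 1:]))\<^sup>2 / ((real N + 1) * (\<Prod>j<N. 1 + (cmod (z j))\<^sup>2))"
proof -
  define K where "K = 4^N / (\<Prod>j<N. 1 + (cmod (z j))\<^sup>2)"
  define c where "c = coeff (\<Prod>j<N. [:- z j, 1:])"
  define d where "d = (\<lambda>t k. c k * complex_of_real (cos (t/2)^k * sin (t/2)^(N - k)))"
  define H where "H = (\<lambda>p. K * (cmod (\<Sum>k\<le>N. d (fst p) k * cis (real k * snd p)))\<^sup>2 * sin (fst p))"
  have "integral (cbox (0, 0) (pi, 2 * pi))
      (\<lambda>(t, f). (\<Prod>j<N. (norm (sphere_param t f - x j))\<^sup>2) * sin t)
      = integral (cbox (0, 0) (pi, 2 * pi)) H"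
    by (intro integral_cong)
      (auto simp: H_def K_def d_def c_def prod_dist_sphere_param_sq[OF assms])
  also have "\<dots> = integral (cbox 0 pi) (\<lambda>t. integral (cbox 0 (2 * pi)) (\<lambda>f. H (t, f)))"
    by (rule integral_prod_continuous) (auto simp: H_def d_def intro!: continuous_intros)
  also have "(\<lambda>t. integral (cbox 0 (2 * pi)) (\<lambda>f. H (t, f)))
      = (\<lambda>t. \<Sum>k\<le>N. (2 * pi * K * (cmod (c k))\<^sup>2) * ((cos (t/2)^2)^k * (sin (t/2)^2)^(N - k) * sin t))"
  proof
    fix t
    have "(cmod (d t k))\<^sup>2 = (cmod (c k))\<^sup>2 * ((cos (t/2)^2)^k * (sin (t/2)^2)^(N - k))" for k
      unfolding d_def norm_mult norm_of_real
      by (simp add: power_mult_distrib power_abs flip: power_mult mult.commute)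
    then have "(K * sin t) * (2 * pi * (\<Sum>k\<le>N. (cmod (d t k))\<^sup>2))
        = (\<Sum>k\<le>N. (2 * pi * K * (cmod (c k))\<^sup>2) * ((cos (t/2)^2)^k * (sin (t/2)^2)^(N - k) * sin t))"
      by (simp add: sum_distrib_left ac_simps)
    moreover have "((\<lambda>f. H (t, f)) has_integral (K * sin t) * (2 * pi * (\<Sum>k\<le>N. (cmod (d t k))\<^sup>2)))
        {0..2 * pi}"
      using has_integral_mult_right[OF has_integral_norm_trig_poly_sq, of "K * sin t"]
      by (simp add: H_def ac_simps)
    ultimately show "integral (cbox 0 (2 * pi)) (\<lambda>f. H (t, f))
        = (\<Sum>k\<le>N. (2 * pi * K * (cmod (c k))\<^sup>2) * ((cos (t/2)^2)^k * (sin (t/2)^2)^(N - k) * sin t))"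
      by (simp add: integral_unique)
  qed
  also have "integral (cbox 0 pi) \<dots>
      = (\<Sum>k\<le>N. (2 * pi * K * (cmod (c k))\<^sup>2) * (2 / ((real N + 1) * real (N choose k))))"
    by (intro integral_unique has_integral_sum finite_atMost has_integral_mult_right)
      (simp add: has_integral_half_angle_binomial)
  also have "\<dots> = 4 * pi * K * (\<Sum>k\<le>N. (cmod (c k))\<^sup>2 / real (N choose k)) / (real N + 1)"
    by (simp add: sum_distrib_left sum_divide_distrib field_simps)
  also have "(\<Sum>k\<le>N. (cmod (c k))\<^sup>2 / real (N choose k)) = (bw_norm N (\<Prod>j<N. [:- z j, 1:]))\<^sup>2"
    unfolding bw_norm_def c_def by (simp add: sum_nonneg)
  finally show ?thesis unfolding sphere_integral_def K_def by simp
qed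

theorem lemma3p3:
  fixes N :: nat and z :: "nat \<Rightarrow> complex" and x :: "nat \<Rightarrow> real^3"
  assumes "inj_on z {..<N}"
    and "\<And>i. i < N \<Longrightarrow> x i \<in> sphere 0 1"
    and "\<And>i. i < N \<Longrightarrow> x i $ 3 \<noteq> 1"
    and "\<And>i. i < N \<Longrightarrow> stereo (x i) = z i"
  shows "log_energy N x
           - (\<Sum>i<N. ln (mu_norm N (\<Prod>j<N. [:- z j, 1:]) (z i)))
         = - real N * ln (sqrt (real N * (real N + 1)) / 2)
           - real N * ln (sqrt (sphere_integral (\<lambda>p. \<Prod>j<N. (norm (p - x j))\<^sup>2)))"
proof (cases "N = 0")
  case True
  then show ?thesis by (simp add: log_energy_def)
next
  case False
  define P where "P = (\<Prod>j<N. [:- z j, 1:])"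
  define L where "L = (\<Sum>i<N. ln (1 + (cmod (z i))\<^sup>2))"
  define D where "D = (\<Sum>i<N. ln (cmod (poly (pderiv P) (z i))))"
  have unit: "\<And>i. i < N \<Longrightarrow> norm (x i) = 1" using assms(2) by simp
  have bw: "bw_norm N P > 0"
    unfolding P_def by (rule bw_norm_pos) (simp add: coeff_prod_monic_linear_top)
  have "poly (pderiv P) (z i) \<noteq> 0" if "i < N" for i
    unfolding P_def poly_pderiv_prod_linear_root[OF that]
    using assms(1) that by (auto dest: inj_onD)
  then have mu: "(\<Sum>i<N. ln (mu_norm N P (z i)))
      = real N * (ln (real N) / 2 + ln (bw_norm N P)) + (real N / 2 - 1) * L - D"
    using False bw unfolding L_def D_def
    by (simp add: ln_mu_norm sum.distrib sum_subtractf sum_distrib_left)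
  have energy: "log_energy N x = - (real N * (real N - 1) * ln 2 + D - (real N - 1) * L)"
    using log_energy_stereo[OF assms(1) unit assms(3,4)] unfolding D_def L_def P_def .
  have "(\<Prod>j<N. 1 + (cmod (z j))\<^sup>2) > 0" by (simp add: prod_pos add_pos_nonneg)
  moreover have "ln (\<Prod>j<N. 1 + (cmod (z j))\<^sup>2) = L"
    unfolding L_def by (intro ln_prod) (auto simp: add_nonneg_eq_0_iff)
  moreover have "sphere_integral (\<lambda>p. \<Prod>j<N. (norm (p - x j))\<^sup>2)
      = 4^N * (bw_norm N P)\<^sup>2 / ((real N + 1) * (\<Prod>j<N. 1 + (cmod (z j))\<^sup>2))"
    unfolding P_def using unit assms(3,4) by (rule sphere_integral_prod_dist_sq)
  ultimately have integral: "ln (sqrt (sphere_integral (\<lambda>p. \<Prod>j<N. (norm (p - x j))\<^sup>2)))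
      = real N * ln 2 + ln (bw_norm N P) - L / 2 - ln (real N + 1) / 2"
    using bw by (simp add: ln_sqrt ln_div ln_mult ln_realpow ln_four add_nonneg_eq_0_iff)
  have normalization: "ln (sqrt (real N * (real N + 1)) / 2) = (ln (real N) + ln (real N + 1)) / 2 - ln 2"
    using False by (simp add: ln_div ln_sqrt ln_mult)
  show ?thesis
    unfolding energy integral normalization P_def[symmetric] mu by (simp add: field_simps)
qed

end
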